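(* Let $k$ be an algebraically closed field of characteristic zero, $n\ge2$, $q\in k$ a primitive $2n$-th root of unity. Let $\mathfrak wH_{4n}^*$ be the algebra generated by $G,X$ with relations $G^{2n+1}=G$, $GX=-XG$, $X^2=1-G^2$, with comultiplication $\Delta(G)=G\otimes G$, $\Delta(X)=X\otimes1+G\otimes X$ (tensor products of modules are formed via $\Delta$). Define the following modules: for $s\in\{0,n\}$, $M[1,s]$ is $1$-dimensional with basis $v_s$, $Xv_s=0$, $Gv_s=(-1)^{s/n}v_s$; $M[2,s]$ is $2$-dimensional with basis $v_1^s,v_2^s$, $Xv_1^s=v_2^s$, $Xv_2^s=0$, $Gv_1^s=(-1)^{s/n}v_1^s$, $Gv_2^s=(-1)^{s/n+1}v_2^s$; for an integer $j$ with $n\nmid j$, $P_j$ is $2$-dimensional with basis $p_1^j,p_2^j$, $Xp_1^j=p_2^j$, $Xp_2^j=(1-q^{2j})p_1^j$, $Gp_1^j=q^jp_1^j$, $Gp_2^j=-q^jp_2^j$; for $i\in\{0,1\}$, $N_i$ is $1$-dimensional with basis $w_i$, $Gw_i=0$, $Xw_i=(-1)^iw_i$; $M_0$ is $2$-dimensional with basis $m_0,m_1$, $Xm_0=m_1$, $Xm_1=m_0$, $G$ acting by $0$. Then the following isomorphisms of $\mathfrak wH_{4n}^*$-modules hold: (1) for $1\le i,j\le n-1$: $P_i\otimes P_j\cong M[2,0]\oplus M[2,n]$ if $n\mid i+j$, and $P_i\otimes P_j\cong P_{i+j}\oplus P_{i+j}$ if $n\nmid i+j$; (2) for $k\in\{1,2\}$,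 $s\in\{0,n\}$, $1\le j\le n-1$: $M[k,s]\otimes P_j\cong P_j^{\oplus k}\cong P_j\otimes M[k,s]$; (3) for $k,l\in\{1,2\}$, $s,j\in\{0,n\}$: $M[k,s]\otimes M[l,j]\cong M[2,0]\oplus M[2,n]$ if $k+l=4$, and $M[k,s]\otimes M[l,j]\cong M[k+l-1,\,s+j \bmod 2n]$ if $k+l<4$; (4) for $i,j\in\{0,1\}$: $N_i\otimes N_j\cong N_i$; (5) for $k\in\{1,2\}$, $s\in\{0,n\}$, $j\in\{0,1\}$: $M[1,s]\otimes N_j\cong N_{j+s/n \bmod 2}$ and $M[2,s]\otimes N_j\cong M_0$; (6) for $k\in\{1,2\}$, $s\in\{0,n\}$, $j\in\{0,1\}$: $N_j\otimes M[k,s]\cong N_j^{\oplus k}$; (7) for $i\in\{0,1\}$, $1\le j\le n-1$: $N_i\otimes P_j\cong N_i\oplus N_i$ and $P_j\otimes N_i\cong M_0$; (8) for $i\in\{0,1\}$: $N_i\otimes M_0\cong N_i\oplus N_i$ and $M_0\otimes N_i\cong M_0$; (9) $M_0\otimes M_0\cong M_0\oplus M_0$; (10) for $k\in\{1,2\}$, $s\in\{0,n\}$: $M_0\otimes M[k,s]\cong M_0^{\oplus k}\cong M[k,s]\otimes M_0$; (11) for $1\le j\le n-1$: $M_0\otimes P_j\cong M_0\oplus M_0\cong P_j\otimes M_0$.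
   Context: The paper lists the indecomposable modules $P_j$ only for $1\le j\le n-1$; in item (1), $P_{i+j}$ with $n<i+j$ is the module defined by the same formula (equivalently, isomorphic to $P_{i+j-n}$). *)

theory Defs
  imports "Jordan_Normal_Form.Matrix" "HOL-Computational_Algebra.Polynomial"
begin

text \<open>A finite-dimensional module over the algebra generated by G, X is represented
  by the pair of matrices (action of G, action of X) with respect to a chosen basis;
  column j of a matrix holds the coordinates of the image of the j-th basis vector.\<close>
type_synonym 'a hmod = "'a mat \<times> 'a mat"

definition alg_closed :: "'a::field itself \<Rightarrow> bool" where
  "alg_closed _ = (\<forall>p::'a poly. degree p \<ge> 1 \<longrightarrow> (\<exists>x. poly p x = 0))"

definition primitive_root :: "nat \<Rightarrow> 'a::field \<Rightarrow> bool" where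
  "primitive_root m q = (q ^ m = 1 \<and> (\<forall>l. 0 < l \<and> l < m \<longrightarrow> q ^ l \<noteq> 1))"

definition kron :: "'a::semiring_1 mat \<Rightarrow> 'a mat \<Rightarrow> 'a mat" where
  "kron A B = mat (dim_row A * dim_row B) (dim_col A * dim_col B)
     (\<lambda>(i,j). A $$ (i div dim_row B, j div dim_col B) * B $$ (i mod dim_row B, j mod dim_col B))"

definition tens :: "'a::comm_ring_1 hmod \<Rightarrow> 'a hmod \<Rightarrow> 'a hmod" (infixl "\<otimes>\<^sub>H" 70) where
  "tens M N = (kron (fst M) (fst N),
               kron (snd M) (1\<^sub>m (dim_row (fst N))) + kron (fst M) (snd N))"

definition dsum :: "'a::comm_ring_1 hmod \<Rightarrow> 'a hmod \<Rightarrow> 'a hmod" (infixl "\<oplus>\<^sub>H" 65) where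
  "dsum M N = (four_block_mat (fst M) (0\<^sub>m (dim_row (fst M)) (dim_col (fst N)))
                              (0\<^sub>m (dim_row (fst N)) (dim_col (fst M))) (fst N),
               four_block_mat (snd M) (0\<^sub>m (dim_row (snd M)) (dim_col (snd N)))
                              (0\<^sub>m (dim_row (snd N)) (dim_col (snd M))) (snd N))"

fun dsum_pow :: "nat \<Rightarrow> 'a::comm_ring_1 hmod \<Rightarrow> 'a hmod" where
  "dsum_pow 0 M = (0\<^sub>m 0 0, 0\<^sub>m 0 0)"
| "dsum_pow (Suc k) M = M \<oplus>\<^sub>H dsum_pow k M"

definition hiso :: "'a::comm_ring_1 hmod \<Rightarrow> 'a hmod \<Rightarrow> bool" (infix "\<cong>\<^sub>H" 50) where
  "hiso M N = (\<exists>P Q. similar_mat_wit (fst M) (fst N) P Q \<and> similar_mat_wit (snd M) (snd N) P Q)"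

definition Mod1 :: "nat \<Rightarrow> nat \<Rightarrow> 'a::field hmod" where
  "Mod1 n s = (mat_of_rows_list 1 [[(-1) ^ (s div n)]], mat_of_rows_list 1 [[0]])"

definition Mod2 :: "nat \<Rightarrow> nat \<Rightarrow> 'a::field hmod" where
  "Mod2 n s = (mat_of_rows_list 2 [[(-1) ^ (s div n), 0], [0, (-1) ^ (s div n + 1)]],
               mat_of_rows_list 2 [[0, 0], [1, 0]])"

definition Mks :: "nat \<Rightarrow> nat \<Rightarrow> nat \<Rightarrow> 'a::field hmod" where
  "Mks n k s = (if k = 1 then Mod1 n s else Mod2 n s)"

definition Pj :: "'a::field \<Rightarrow> nat \<Rightarrow> 'a hmod" where
  "Pj q j = (mat_of_rows_list 2 [[q ^ j, 0], [0, - (q ^ j)]],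
             mat_of_rows_list 2 [[0, 1 - q ^ (2 * j)], [1, 0]])"

definition Ni :: "nat \<Rightarrow> 'a::field hmod" where
  "Ni i = (mat_of_rows_list 1 [[0]], mat_of_rows_list 1 [[(-1) ^ i]])"

definition M0 :: "'a::field hmod" where
  "M0 = (mat_of_rows_list 2 [[0, 0], [0, 0]], mat_of_rows_list 2 [[0, 1], [1, 0]])"

end

theory Submission
  imports Defs
begin

(*
  A module is a pair of matrices (G, X), and an isomorphism is one invertible matrix P with
  G P = P G' and X P = P X'.  Every tensor product of the table splits into cyclic submodules
  spanned by a G-eigenvector u and X u; these vectors are the columns of P, so each isomorphism
  comes down to multiplying explicit matrices of size at most 4.

  All modules of the table lie in three one-parameter families: Pmod a, with G = diag(a, -a) and
  X^2 = 1 - a^2, which contains P_j = Pmod (q^j) and also M[2,s] = Pmod (+1 or -1); M1mod e,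
  containing M[1,s]; and Nmod x, containing N_i.  The tensor products are computed once within
  the families, with symbolic parameters.  The root q then enters only through the facts that
  (q^j)^2 = 1 exactly when n divides j, and q^n = -1: the product P_i (x) P_j degenerates into
  M[2,0] (+) M[2,n] exactly when (q^i q^j)^2 = 1.
*)

section \<open>Isomorphism of modules\<close>

lemma hiso_sym:
  assumes "M \<cong>\<^sub>H N"
  shows "N \<cong>\<^sub>H M"
  using assms similar_mat_wit_sym unfolding hiso_def by blast

lemma hiso_trans:
  assumes "L \<cong>\<^sub>H M" and "M \<cong>\<^sub>H N"
  shows "L \<cong>\<^sub>H N"
  using assms similar_mat_wit_trans unfolding hiso_def by blast

lemma hiso_refl:
  assumes "fst M \<in> carrier_mat n n" and "snd M \<in> carrier_mat n n"
  shows "M \<cong>\<^sub>H M"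
  using similar_mat_wit_refl[OF assms(1)] similar_mat_wit_refl[OF assms(2)] unfolding hiso_def by blast

lemma similar_mat_wit_carrier:
  assumes "similar_mat_wit A B P Q" and "P \<in> carrier_mat n n"
  shows "A \<in> carrier_mat n n" "B \<in> carrier_mat n n" "Q \<in> carrier_mat n n"
proof -
  have "dim_row A = n"
    using similar_mat_witD(6)[OF refl assms(1)] assms(2) by (metis carrier_matD(1))
  then show "A \<in> carrier_mat n n" "B \<in> carrier_mat n n" "Q \<in> carrier_mat n n"
    using similar_mat_witD(4,5,7)[OF refl assms(1)] by argo+
qed

lemma hiso_dsum:
  fixes M M' N N' :: "'a::comm_ring_1 hmod"
  assumes "M \<cong>\<^sub>H M'" and "N \<cong>\<^sub>H N'"
  shows "M \<oplus>\<^sub>H N \<cong>\<^sub>H M' \<oplus>\<^sub>H N'"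
proof -
  obtain P Q where PQ: "similar_mat_wit (fst M) (fst M') P Q" "similar_mat_wit (snd M) (snd M') P Q"
    using assms(1) unfolding hiso_def by blast
  obtain R S where RS: "similar_mat_wit (fst N) (fst N') R S" "similar_mat_wit (snd N) (snd N') R S"
    using assms(2) unfolding hiso_def by blast
  define m k where "m = dim_row P" and "k = dim_row R"
  have P: "P \<in> carrier_mat m m" and R: "R \<in> carrier_mat k k"
    unfolding m_def k_def
    using similar_mat_witD(6)[OF refl PQ(1)] similar_mat_witD(6)[OF refl RS(1)] by auto
  note M = similar_mat_wit_carrier[OF PQ(1) P] similar_mat_wit_carrier[OF PQ(2) P]
  note N = similar_mat_wit_carrier[OF RS(1) R] similar_mat_wit_carrier[OF RS(2) R]
  have zero: "0\<^sub>m m k = P * 0\<^sub>m m k * S" "0\<^sub>m k m = R * 0\<^sub>m k m * Q"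
    using carrier_matD[OF P] carrier_matD[OF R] carrier_matD[OF M(3)] carrier_matD[OF N(3)] by simp_all
  have "similar_mat_wit (fst (M \<oplus>\<^sub>H N)) (fst (M' \<oplus>\<^sub>H N'))
          (four_block_mat P (0\<^sub>m m k) (0\<^sub>m k m) R) (four_block_mat Q (0\<^sub>m m k) (0\<^sub>m k m) S)"
    using similar_mat_wit_four_block[OF PQ(1) RS(1) zero M(1) N(1) zero_carrier_mat zero_carrier_mat]
      carrier_matD[OF M(1)] carrier_matD[OF M(2)] carrier_matD[OF N(1)] carrier_matD[OF N(2)]
    by (simp add: dsum_def)
  moreover have "similar_mat_wit (snd (M \<oplus>\<^sub>H N)) (snd (M' \<oplus>\<^sub>H N'))
          (four_block_mat P (0\<^sub>m m k) (0\<^sub>m k m) R) (four_block_mat Q (0\<^sub>m m k) (0\<^sub>m k m) S)"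
    using similar_mat_wit_four_block[OF PQ(2) RS(2) zero M(4) N(4) zero_carrier_mat zero_carrier_mat]
      carrier_matD[OF M(4)] carrier_matD[OF M(5)] carrier_matD[OF N(4)] carrier_matD[OF N(5)]
    by (simp add: dsum_def)
  ultimately show ?thesis
    unfolding hiso_def by blast
qed

lemma dsum_empty: "M \<oplus>\<^sub>H (0\<^sub>m 0 0, 0\<^sub>m 0 0) = M"
proof -
  have "four_block_mat A (0\<^sub>m (dim_row A) 0) (0\<^sub>m 0 (dim_col A)) (0\<^sub>m 0 0) = A" for A :: "'a mat"
    by (rule eq_matI) simp_all
  then show ?thesis
    by (simp add: dsum_def)
qed

lemma dsum_pow_2: "dsum_pow 2 M = M \<oplus>\<^sub>H M"
  by (simp add: numeral_eq_Suc dsum_empty)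

lemma hiso_by_intertwiner:
  fixes M N :: "'a::comm_ring_1 hmod"
  assumes carrier: "fst M \<in> carrier_mat n n" "snd M \<in> carrier_mat n n"
      "fst N \<in> carrier_mat n n" "snd N \<in> carrier_mat n n"
      "P \<in> carrier_mat n n" "Q \<in> carrier_mat n n"
    and inverse: "P * Q = 1\<^sub>m n" "Q * P = 1\<^sub>m n"
    and intertwines: "fst M * P = P * fst N" "snd M * P = P * snd N"
  shows "M \<cong>\<^sub>H N"
proof -
  have conj: "A = P * B * Q" if "A \<in> carrier_mat n n" "B \<in> carrier_mat n n" "A * P = P * B" for A B
  proof -
    have "A = A * (P * Q)" using that carrier inverse by simp
    also have "\<dots> = A * P * Q" by (rule assoc_mult_mat[symmetric]) (use that carrier in auto)
    finally show ?thesis using that by simp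
  qed
  have "similar_mat_wit (fst M) (fst N) P Q" "similar_mat_wit (snd M) (snd N) P Q"
    using carrier inverse conj[OF _ _ intertwines(1)] conj[OF _ _ intertwines(2)]
    by (auto simp: similar_mat_wit_def Let_def)
  then show ?thesis
    unfolding hiso_def by blast
qed

lemma eq_mat_entrywiseI:
  assumes "A \<in> carrier_mat n n" "B \<in> carrier_mat n n" "\<forall>i<n. \<forall>j<n. A $$ (i, j) = B $$ (i, j)"
  shows "A = B"
proof (rule eq_matI)
  fix i j assume "i < dim_row B" "j < dim_col B"
  then show "A $$ (i, j) = B $$ (i, j)" using assms(3) carrier_matD[OF assms(2)] by simp
qed (use carrier_matD[OF assms(1)] carrier_matD[OF assms(2)] in simp_all)

text \<open>The concrete isomorphisms below are instances of the following form, in which everything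
  is stated by dimension equations and entries, so that simp can evaluate it.\<close>

lemma hiso_by_intertwiner_entrywise:
  fixes M N :: "'a::comm_ring_1 hmod"
  assumes "dim_row (fst M) = n" "dim_col (fst M) = n" "dim_row (snd M) = n" "dim_col (snd M) = n"
      "dim_row (fst N) = n" "dim_col (fst N) = n" "dim_row (snd N) = n" "dim_col (snd N) = n"
      "dim_row P = n" "dim_col P = n" "dim_row Q = n" "dim_col Q = n"
    and "\<forall>i<n. \<forall>j<n. (P * Q) $$ (i, j) = 1\<^sub>m n $$ (i, j)"
      "\<forall>i<n. \<forall>j<n. (Q * P) $$ (i, j) = 1\<^sub>m n $$ (i, j)"
      "\<forall>i<n. \<forall>j<n. (fst M * P) $$ (i, j) = (P * fst N) $$ (i, j)"
      "\<forall>i<n. \<forall>j<n. (snd M * P) $$ (i, j) = (P * snd N) $$ (i, j)"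
  shows "M \<cong>\<^sub>H N"
proof -
  have carrier: "fst M \<in> carrier_mat n n" "snd M \<in> carrier_mat n n"
      "fst N \<in> carrier_mat n n" "snd N \<in> carrier_mat n n"
      "P \<in> carrier_mat n n" "Q \<in> carrier_mat n n"
    using assms(1-12) by (auto intro: carrier_matI)
  show ?thesis
  proof (rule hiso_by_intertwiner[OF carrier])
    show "P * Q = 1\<^sub>m n"
      by (rule eq_mat_entrywiseI[OF mult_carrier_mat[OF carrier(5,6)] one_carrier_mat assms(13)])
    show "Q * P = 1\<^sub>m n"
      by (rule eq_mat_entrywiseI[OF mult_carrier_mat[OF carrier(6,5)] one_carrier_mat assms(14)])
    show "fst M * P = P * fst N"
      by (rule eq_mat_entrywiseI[OF mult_carrier_mat[OF carrier(1,5)] mult_carrier_mat[OF carrier(5,3)] assms(15)])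
    show "snd M * P = P * snd N"
      by (rule eq_mat_entrywiseI[OF mult_carrier_mat[OF carrier(2,5)] mult_carrier_mat[OF carrier(5,4)] assms(16)])
  qed
qed

lemma all_less_4: "(\<forall>i<4::nat. P i) \<longleftrightarrow> P 0 \<and> P 1 \<and> P 2 \<and> P 3"
  by (auto simp: less_Suc_eq numeral_eq_Suc)

lemma all_less_2: "(\<forall>i<2::nat. P i) \<longleftrightarrow> P 0 \<and> P 1"
  by (auto simp: less_Suc_eq numeral_eq_Suc)

lemma sum_lessThan_4: "(\<Sum>i<4::nat. f i) = f 0 + f 1 + f 2 + f 3"
  by (simp add: numeral_eq_Suc)

lemma sum_lessThan_2: "(\<Sum>i<2::nat. f i) = f 0 + f 1"
  by (simp add: numeral_eq_Suc)

lemma index_mult_mat_sum: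
  "i < dim_row A \<Longrightarrow> j < dim_col B \<Longrightarrow> dim_col A = dim_row B \<Longrightarrow>
   (A * B) $$ (i, j) = (\<Sum>k<dim_row B. A $$ (i, k) * B $$ (k, j))"
  by (auto simp: scalar_prod_def atLeast0LessThan intro!: sum.cong)

lemma dim_kron [simp]:
  "dim_row (kron A B) = dim_row A * dim_row B" "dim_col (kron A B) = dim_col A * dim_col B"
  by (simp_all add: kron_def)

lemma index_kron [simp]:
  "i < dim_row A * dim_row B \<Longrightarrow> j < dim_col A * dim_col B \<Longrightarrow>
   kron A B $$ (i, j) = A $$ (i div dim_row B, j div dim_col B) * B $$ (i mod dim_row B, j mod dim_col B)"
  by (simp add: kron_def)

text \<open>Square matrices with their size given as a numeral: the dimension of
  \<^term>\<open>mat_of_rows_list n rs\<close> is \<^term>\<open>length rs\<close>, which simp turns into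
  \<^term>\<open>Suc (Suc 0)\<close>, and then \<open>div\<close> and \<open>mod\<close> on index numerals no longer evaluate.\<close>

definition sqmat :: "nat \<Rightarrow> 'a list list \<Rightarrow> 'a mat" where
  "sqmat n rs = mat n n (\<lambda>(i, j). rs ! i ! j)"

lemma sqmat_carrier [simp]: "sqmat n rs \<in> carrier_mat n n"
  and dim_sqmat [simp]: "dim_row (sqmat n rs) = n" "dim_col (sqmat n rs) = n"
  by (simp_all add: sqmat_def)

lemma index_sqmat [simp]: "i < n \<Longrightarrow> j < n \<Longrightarrow> sqmat n rs $$ (i, j) = rs ! i ! j"
  by (simp add: sqmat_def)

lemma mat_of_rows_list_sqmat: "length rs = n \<Longrightarrow> mat_of_rows_list n rs = sqmat n rs"
  by (simp add: mat_of_rows_list_def sqmat_def)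

lemmas entrywise_simps = all_less_4 all_less_2 sum_lessThan_4 sum_lessThan_2 index_mult_mat_sum tens_def dsum_def

section \<open>Three families of modules\<close>

definition Pmod :: "'a::field \<Rightarrow> 'a hmod" where
  "Pmod a = (sqmat 2 [[a, 0], [0, - a]], sqmat 2 [[0, 1 - a\<^sup>2], [1, 0]])"

definition M1mod :: "'a::field \<Rightarrow> 'a hmod" where
  "M1mod e = (sqmat 1 [[e]], sqmat 1 [[0]])"

definition Nmod :: "'a::field \<Rightarrow> 'a hmod" where
  "Nmod x = (sqmat 1 [[0]], sqmat 1 [[x]])"

lemma M0_sqmat: "M0 = (sqmat 2 [[0, 0], [0, 0]], sqmat 2 [[0, 1], [1, 0]])"
  by (simp add: M0_def mat_of_rows_list_sqmat)

lemmas hmod_defs = Pmod_def M1mod_def Nmod_def M0_sqmat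

lemma hmod_carrier:
  "fst (Pmod a) \<in> carrier_mat 2 2" "snd (Pmod a) \<in> carrier_mat 2 2"
  "fst (M1mod e) \<in> carrier_mat 1 1" "snd (M1mod e) \<in> carrier_mat 1 1"
  "fst (Nmod x) \<in> carrier_mat 1 1" "snd (Nmod x) \<in> carrier_mat 1 1"
  "fst M0 \<in> carrier_mat 2 2" "snd M0 \<in> carrier_mat 2 2"
  by (simp_all add: hmod_defs)

lemma Pj_eq_Pmod: "Pj q j = Pmod (q ^ j)"
  by (simp add: Pj_def Pmod_def mat_of_rows_list_sqmat power_mult[symmetric] mult.commute)

lemma Mks_eq: "Mks n k s = (if k = 1 then M1mod ((- 1) ^ (s div n)) else Pmod ((- 1) ^ (s div n)))"
  by (simp add: Mks_def Mod1_def Mod2_def M1mod_def Pmod_def mat_of_rows_list_sqmat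
      power_mult[symmetric] mult.commute)

lemma Ni_eq_Nmod: "Ni i = Nmod ((- 1) ^ i)"
  by (simp add: Ni_def Nmod_def mat_of_rows_list_sqmat)

section \<open>Tensor products within the families\<close>

lemma Pmod_tens_Pmod:
  fixes a b :: "'a::field"
  assumes "a\<^sup>2 * b\<^sup>2 \<noteq> 1"
  shows "Pmod a \<otimes>\<^sub>H Pmod b \<cong>\<^sub>H Pmod (a * b) \<oplus>\<^sub>H Pmod (a * b)"
proof -
  txt \<open>Cyclic submodules generated by \<open>p\<^sub>1 \<otimes> p\<^sub>1\<close> and \<open>p\<^sub>2 \<otimes> p\<^sub>2\<close>;
    up to sign, \<open>d\<close> is the determinant of \<open>P\<close>.\<close>
  define d where "d = a\<^sup>2 * b\<^sup>2 - 1"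
  have "d \<noteq> 0" using assms by (simp add: d_def)
  show ?thesis
    apply (rule hiso_by_intertwiner_entrywise[where n = 4 and
      P = "sqmat 4 [[1, 0, 0, 0], [0, a, 0, 1 - a\<^sup>2], [0, 1, 0, - a * (1 - b\<^sup>2)], [0, 0, 1, 0]]" and
      Q = "sqmat 4 [[1, 0, 0, 0], [0, - a * (1 - b\<^sup>2) / d, - (1 - a\<^sup>2) / d, 0], [0, 0, 0, 1],
                    [0, - 1 / d, a / d, 0]]"])
    apply (simp_all add: hmod_defs entrywise_simps del: index_mult_mat)
    using \<open>d \<noteq> 0\<close> apply (simp_all add: field_simps)
    apply (simp_all add: d_def algebra_simps power2_eq_square)
    done
qed

lemma Pmod_tens_Pmod_degenerate:
  fixes a b :: "'a::field"
  assumes "(a * b)\<^sup>2 = 1"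
  shows "Pmod a \<otimes>\<^sub>H Pmod b \<cong>\<^sub>H Pmod 1 \<oplus>\<^sub>H Pmod (- 1)"
proof -
  txt \<open>Now \<open>p\<^sub>1 \<otimes> p\<^sub>1\<close> and \<open>p\<^sub>1 \<otimes> p\<^sub>2\<close> are killed by \<open>X\<^sup>2\<close> and
    have \<open>G\<close>-eigenvalues \<open>a b\<close> and \<open>- a b\<close>.\<close>
  from assms consider "a * b = 1" | "a * b = - 1"
    by (auto simp: power2_eq_1_iff)
  then show ?thesis
  proof cases
    case 1
    show ?thesis
      apply (rule hiso_by_intertwiner_entrywise[where n = 4 and
        P = "sqmat 4 [[1, 0, 0, a * (1 - b\<^sup>2)], [0, a, 1, 0], [0, 1, 0, 0], [0, 0, 0, 1]]" and
        Q = "sqmat 4 [[1, 0, 0, - a * (1 - b\<^sup>2)], [0, 0, 1, 0], [0, 1, - a, 0], [0, 0, 0, 1]]"])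
      using 1 by (simp_all add: hmod_defs entrywise_simps del: index_mult_mat)
        (simp add: algebra_simps power2_eq_square flip: mult.assoc)
  next
    case 2
    show ?thesis
      apply (rule hiso_by_intertwiner_entrywise[where n = 4 and
        P = "sqmat 4 [[0, a * (1 - b\<^sup>2), 1, 0], [1, 0, 0, a], [0, 0, 0, 1], [0, 1, 0, 0]]" and
        Q = "sqmat 4 [[0, 1, - a, 0], [0, 0, 0, 1], [1, 0, 0, - a * (1 - b\<^sup>2)], [0, 0, 1, 0]]"])
      using 2 by (simp_all add: hmod_defs entrywise_simps del: index_mult_mat)
        (simp add: algebra_simps power2_eq_square flip: mult.assoc)
  qed
qed

text \<open>Since \<open>q\<^sup>j\<^sup>+\<^sup>n = - q\<^sup>j\<close>, this is the isomorphism \<open>P\<^sub>j\<^sub>+\<^sub>n \<cong> P\<^sub>j\<close>.\<close>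

lemma Pmod_neg_iso:
  fixes a :: "'a::field"
  assumes "1 - a\<^sup>2 \<noteq> 0"
  shows "Pmod (- a) \<cong>\<^sub>H Pmod a"
  apply (rule hiso_by_intertwiner_entrywise[where n = 2 and
    P = "sqmat 2 [[0, 1 - a\<^sup>2], [1, 0]]" and Q = "sqmat 2 [[0, 1], [1 / (1 - a\<^sup>2), 0]]"])
  using assms by (simp_all add: hmod_defs entrywise_simps del: index_mult_mat)

lemma M1mod_tens_Pmod:
  fixes a e :: "'a::field"
  assumes "e\<^sup>2 = 1"
  shows "M1mod e \<otimes>\<^sub>H Pmod a \<cong>\<^sub>H Pmod (e * a)"
  apply (rule hiso_by_intertwiner_entrywise[where n = 2 and
    P = "sqmat 2 [[1, 0], [0, e]]" and Q = "sqmat 2 [[1, 0], [0, e]]"])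
  using assms by (simp_all add: hmod_defs entrywise_simps power2_eq_square algebra_simps del: index_mult_mat)

lemma Pmod_tens_M1mod:
  fixes a e :: "'a::field"
  assumes "e\<^sup>2 = 1"
  shows "Pmod a \<otimes>\<^sub>H M1mod e \<cong>\<^sub>H Pmod (a * e)"
  apply (rule hiso_by_intertwiner_entrywise[where n = 2 and
    P = "sqmat 2 [[1, 0], [0, 1]]" and Q = "sqmat 2 [[1, 0], [0, 1]]"])
  using assms by (simp_all add: hmod_defs entrywise_simps power_mult_distrib del: index_mult_mat)

lemma M1mod_tens_M1mod:
  fixes e f :: "'a::field"
  shows "M1mod e \<otimes>\<^sub>H M1mod f \<cong>\<^sub>H M1mod (e * f)"
  by (rule hiso_by_intertwiner_entrywise[where n = 1 and P = "sqmat 1 [[1]]" and Q = "sqmat 1 [[1]]"])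
    (simp_all add: hmod_defs entrywise_simps del: index_mult_mat)

lemma M1mod_tens_Nmod:
  fixes e x :: "'a::field"
  shows "M1mod e \<otimes>\<^sub>H Nmod x \<cong>\<^sub>H Nmod (e * x)"
  by (rule hiso_by_intertwiner_entrywise[where n = 1 and P = "sqmat 1 [[1]]" and Q = "sqmat 1 [[1]]"])
    (simp_all add: hmod_defs entrywise_simps del: index_mult_mat)

lemma Pmod_tens_Nmod:
  fixes a x :: "'a::field"
  assumes "x\<^sup>2 = 1"
  shows "Pmod a \<otimes>\<^sub>H Nmod x \<cong>\<^sub>H M0"
  apply (rule hiso_by_intertwiner_entrywise[where n = 2 and
    P = "sqmat 2 [[1, a * x], [0, 1]]" and Q = "sqmat 2 [[1, - (a * x)], [0, 1]]"])
  using assms by (simp_all add: hmod_defs entrywise_simps power2_eq_square algebra_simps del: index_mult_mat)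

lemma M1mod_tens_M0:
  fixes e :: "'a::field"
  assumes "e\<^sup>2 = 1"
  shows "M1mod e \<otimes>\<^sub>H M0 \<cong>\<^sub>H M0"
  apply (rule hiso_by_intertwiner_entrywise[where n = 2 and
    P = "sqmat 2 [[1, 0], [0, e]]" and Q = "sqmat 2 [[1, 0], [0, e]]"])
  using assms by (simp_all add: hmod_defs entrywise_simps power2_eq_square del: index_mult_mat)

lemma Pmod_tens_M0:
  fixes a :: "'a::field"
  shows "Pmod a \<otimes>\<^sub>H M0 \<cong>\<^sub>H M0 \<oplus>\<^sub>H M0"
  by (rule hiso_by_intertwiner_entrywise[where n = 4 and
      P = "sqmat 4 [[1, 0, 0, a], [0, a, 1, 0], [0, 1, 0, 0], [0, 0, 0, 1]]" and
      Q = "sqmat 4 [[1, 0, 0, - a], [0, 0, 1, 0], [0, 1, - a, 0], [0, 0, 0, 1]]"])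
    (simp_all add: hmod_defs entrywise_simps algebra_simps power2_eq_square del: index_mult_mat)

text \<open>\<open>G\<close> acts by zero on \<^term>\<open>Nmod x\<close> and on \<^term>\<open>M0\<close>, so on their tensor products
  with \<open>V\<close> the element \<open>X\<close> acts as \<open>X \<otimes> 1\<close>: only the dimension of \<open>V\<close> matters.\<close>

lemma Nmod_tens_dim_1:
  fixes x :: "'a::field"
  assumes "fst V \<in> carrier_mat 1 1" "snd V \<in> carrier_mat 1 1"
  shows "Nmod x \<otimes>\<^sub>H V \<cong>\<^sub>H Nmod x"
  apply (rule hiso_by_intertwiner_entrywise[where n = 1 and P = "sqmat 1 [[1]]" and Q = "sqmat 1 [[1]]"])
  using carrier_matD[OF assms(1)] carrier_matD[OF assms(2)]
  by (simp_all add: hmod_defs entrywise_simps del: index_mult_mat)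

lemma Nmod_tens_dim_2:
  fixes x :: "'a::field"
  assumes "fst V \<in> carrier_mat 2 2" "snd V \<in> carrier_mat 2 2"
  shows "Nmod x \<otimes>\<^sub>H V \<cong>\<^sub>H Nmod x \<oplus>\<^sub>H Nmod x"
  apply (rule hiso_by_intertwiner_entrywise[where n = 2 and
    P = "sqmat 2 [[1, 0], [0, 1]]" and Q = "sqmat 2 [[1, 0], [0, 1]]"])
  using carrier_matD[OF assms(1)] carrier_matD[OF assms(2)]
  by (simp_all add: hmod_defs entrywise_simps del: index_mult_mat)

lemma M0_tens_dim_1:
  assumes "fst V \<in> carrier_mat 1 1" "snd V \<in> carrier_mat 1 1"
  shows "M0 \<otimes>\<^sub>H V \<cong>\<^sub>H (M0 :: 'a::field hmod)"
  apply (rule hiso_by_intertwiner_entrywise[where n = 2 and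
    P = "sqmat 2 [[1, 0], [0, 1]]" and Q = "sqmat 2 [[1, 0], [0, 1]]"])
  using carrier_matD[OF assms(1)] carrier_matD[OF assms(2)]
  by (simp_all add: hmod_defs entrywise_simps del: index_mult_mat)

lemma M0_tens_dim_2:
  assumes "fst V \<in> carrier_mat 2 2" "snd V \<in> carrier_mat 2 2"
  shows "M0 \<otimes>\<^sub>H V \<cong>\<^sub>H M0 \<oplus>\<^sub>H (M0 :: 'a::field hmod)"
  apply (rule hiso_by_intertwiner_entrywise[where n = 4 and
    P = "sqmat 4 [[1, 0, 0, 0], [0, 0, 1, 0], [0, 1, 0, 0], [0, 0, 0, 1]]" and
    Q = "sqmat 4 [[1, 0, 0, 0], [0, 0, 1, 0], [0, 1, 0, 0], [0, 0, 0, 1]]"])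
  using carrier_matD[OF assms(1)] carrier_matD[OF assms(2)]
  by (simp_all add: hmod_defs entrywise_simps del: index_mult_mat)

section \<open>Primitive roots of unity\<close>

lemma primitive_root_pow_eq_1_iff:
  fixes q :: "'a::field"
  assumes "primitive_root m q" and "0 < m"
  shows "q ^ k = 1 \<longleftrightarrow> m dvd k"
proof -
  have "q ^ m = 1" and minimal: "\<And>l. 0 < l \<Longrightarrow> l < m \<Longrightarrow> q ^ l \<noteq> 1"
    using assms(1) unfolding primitive_root_def by auto
  have "q ^ k = (q ^ m) ^ (k div m) * q ^ (k mod m)"
    by (simp flip: power_mult power_add)
  then have "q ^ k = q ^ (k mod m)"
    using \<open>q ^ m = 1\<close> by simp
  then show ?thesis
    using minimal[of "k mod m"] assms(2) by (auto simp: mod_eq_0_iff_dvd)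
qed

lemma primitive_root_sq_pow_eq_1_iff:
  fixes q :: "'a::field"
  assumes "primitive_root (2 * n) q" and "0 < n"
  shows "(q ^ j)\<^sup>2 = 1 \<longleftrightarrow> n dvd j"
  using primitive_root_pow_eq_1_iff[OF assms(1), of "2 * j"] assms(2)
  by (simp add: power_mult[symmetric] mult.commute)

lemma primitive_root_pow_half:
  fixes q :: "'a::field"
  assumes "primitive_root (2 * n) q" and "0 < n"
  shows "q ^ n = - 1"
proof -
  have "(q ^ n)\<^sup>2 = 1"
    using primitive_root_sq_pow_eq_1_iff[OF assms] by simp
  moreover have "q ^ n \<noteq> 1"
    using primitive_root_pow_eq_1_iff[OF assms(1), of n] assms(2) by auto
  ultimately show ?thesis
    by (simp add: power2_eq_1_iff)
qed

section \<open>The tensor product table\<close>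

lemma neg_one_power_sq: "((- 1 :: 'a::comm_ring_1) ^ m)\<^sup>2 = 1"
  by (simp flip: power_mult)

lemma Pmod_sign_iso:
  fixes a e :: "'a::field"
  assumes "e\<^sup>2 = 1" and "1 - a\<^sup>2 \<noteq> 0"
  shows "Pmod (e * a) \<cong>\<^sub>H Pmod a"
proof -
  from assms(1) consider "e = 1" | "e = - 1"
    by (auto simp: power2_eq_1_iff)
  then show ?thesis
    by cases (simp_all add: hiso_refl[OF hmod_carrier(1,2)] Pmod_neg_iso[OF assms(2)])
qed

lemma Mks_tens_Pmod:
  fixes a :: "'a::field"
  assumes "k \<in> {1, 2}" and "1 - a\<^sup>2 \<noteq> 0"
  shows "Mks n k s \<otimes>\<^sub>H Pmod a \<cong>\<^sub>H dsum_pow k (Pmod a)"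
    and "dsum_pow k (Pmod a) \<cong>\<^sub>H Pmod a \<otimes>\<^sub>H Mks n k s"
proof -
  define e :: 'a where "e = (- 1) ^ (s div n)"
  have e: "e\<^sup>2 = 1"
    unfolding e_def by (rule neg_one_power_sq)
  have "e\<^sup>2 * a\<^sup>2 \<noteq> 1" "a\<^sup>2 * e\<^sup>2 \<noteq> 1"
    using e assms(2) by simp_all
  note P_tens_P = Pmod_tens_Pmod[OF this(1)] Pmod_tens_Pmod[OF this(2)]
  have sign: "Pmod (e * a) \<cong>\<^sub>H Pmod a" "Pmod (a * e) \<cong>\<^sub>H Pmod a"
    using Pmod_sign_iso[OF e assms(2)] by (simp_all add: mult.commute)
  have M1: "M1mod e \<otimes>\<^sub>H Pmod a \<cong>\<^sub>H Pmod a" "Pmod a \<cong>\<^sub>H Pmod a \<otimes>\<^sub>H M1mod e"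
    using hiso_trans[OF M1mod_tens_Pmod[OF e] sign(1)]
      hiso_sym[OF hiso_trans[OF Pmod_tens_M1mod[OF e] sign(2)]] .
  have M2: "Pmod e \<otimes>\<^sub>H Pmod a \<cong>\<^sub>H Pmod a \<oplus>\<^sub>H Pmod a" "Pmod a \<oplus>\<^sub>H Pmod a \<cong>\<^sub>H Pmod a \<otimes>\<^sub>H Pmod e"
    using hiso_trans[OF P_tens_P(1) hiso_dsum[OF sign(1) sign(1)]]
      hiso_sym[OF hiso_trans[OF P_tens_P(2) hiso_dsum[OF sign(2) sign(2)]]] .
  show "Mks n k s \<otimes>\<^sub>H Pmod a \<cong>\<^sub>H dsum_pow k (Pmod a)"
    "dsum_pow k (Pmod a) \<cong>\<^sub>H Pmod a \<otimes>\<^sub>H Mks n k s"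
    using assms(1) M1 M2 by (auto simp: Mks_eq dsum_empty dsum_pow_2 simp flip: e_def)
qed

lemma Mks_tens_Mks:
  assumes "0 < n" and "s \<in> {0, n}" and "j \<in> {0, n}" and "k \<in> {1, 2}" and "l \<in> {1, 2}"
  shows "k + l = 4 \<Longrightarrow> Mks n k s \<otimes>\<^sub>H Mks n l j \<cong>\<^sub>H Mks n 2 0 \<oplus>\<^sub>H (Mks n 2 n :: 'a::field hmod)"
    and "k + l < 4 \<Longrightarrow> Mks n k s \<otimes>\<^sub>H Mks n l j \<cong>\<^sub>H (Mks n (k + l - 1) ((s + j) mod (2 * n)) :: 'a::field hmod)"
proof -
  define e f :: 'a where "e = (- 1) ^ (s div n)" and "f = (- 1) ^ (j div n)"
  have e: "e\<^sup>2 = 1" and f: "f\<^sup>2 = 1"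
    unfolding e_def f_def by (rule neg_one_power_sq)+
  have ef: "(e * f)\<^sup>2 = 1"
    using e f by (simp add: power_mult_distrib)
  have sign_sum: "(- 1) ^ ((s + j) mod (2 * n) div n) = e * f"
    using assms(1-3) by (auto simp: e_def f_def mult_2)
  show "k + l = 4 \<Longrightarrow> Mks n k s \<otimes>\<^sub>H Mks n l j \<cong>\<^sub>H Mks n 2 0 \<oplus>\<^sub>H (Mks n 2 n :: 'a hmod)"
    using assms(1,4,5) Pmod_tens_Pmod_degenerate[OF ef]
    by (auto simp: Mks_eq simp flip: e_def f_def)
  show "k + l < 4 \<Longrightarrow> Mks n k s \<otimes>\<^sub>H Mks n l j \<cong>\<^sub>H (Mks n (k + l - 1) ((s + j) mod (2 * n)) :: 'a hmod)"
    using assms(4,5) M1mod_tens_M1mod[of e f] M1mod_tens_Pmod[OF e, of f] Pmod_tens_M1mod[OF f, of e]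
    by (auto simp: Mks_eq sign_sum simp flip: e_def f_def)
qed

lemma Mks_carrier:
  assumes "k \<in> {1, 2}"
  shows "fst (Mks n k s) \<in> carrier_mat k k" and "snd (Mks n k s) \<in> carrier_mat k k"
  using assms hmod_carrier by (auto simp: Mks_eq)

lemma Ni_tens:
  fixes q :: "'a::field"
  shows "Ni i \<otimes>\<^sub>H Ni j \<cong>\<^sub>H (Ni i :: 'a hmod)"
    and "k \<in> {1, 2} \<Longrightarrow> Ni j \<otimes>\<^sub>H Mks n k s \<cong>\<^sub>H dsum_pow k (Ni j :: 'a hmod)"
    and "Ni i \<otimes>\<^sub>H Pj q j \<cong>\<^sub>H Ni i \<oplus>\<^sub>H Ni i"
    and "Ni i \<otimes>\<^sub>H M0 \<cong>\<^sub>H Ni i \<oplus>\<^sub>H (Ni i :: 'a hmod)"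
proof -
  show "Ni i \<otimes>\<^sub>H Ni j \<cong>\<^sub>H (Ni i :: 'a hmod)"
    using Nmod_tens_dim_1[OF hmod_carrier(5,6)] by (simp add: Ni_eq_Nmod)
  show "Ni j \<otimes>\<^sub>H Mks n k s \<cong>\<^sub>H dsum_pow k (Ni j :: 'a hmod)" if "k \<in> {1, 2}"
    using that Nmod_tens_dim_1[OF Mks_carrier] Nmod_tens_dim_2[OF Mks_carrier]
    by (auto simp: Ni_eq_Nmod dsum_empty dsum_pow_2)
  show "Ni i \<otimes>\<^sub>H Pj q j \<cong>\<^sub>H Ni i \<oplus>\<^sub>H Ni i"
    using Nmod_tens_dim_2[OF hmod_carrier(1,2)] by (simp add: Ni_eq_Nmod Pj_eq_Pmod)
  show "Ni i \<otimes>\<^sub>H M0 \<cong>\<^sub>H Ni i \<oplus>\<^sub>H (Ni i :: 'a hmod)"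
    using Nmod_tens_dim_2[OF hmod_carrier(7,8)] by (simp add: Ni_eq_Nmod)
qed

lemma M0_tens:
  fixes q :: "'a::field"
  shows "M0 \<otimes>\<^sub>H Ni i \<cong>\<^sub>H (M0 :: 'a hmod)"
    and "M0 \<otimes>\<^sub>H M0 \<cong>\<^sub>H M0 \<oplus>\<^sub>H (M0 :: 'a hmod)"
    and "M0 \<otimes>\<^sub>H Pj q j \<cong>\<^sub>H M0 \<oplus>\<^sub>H M0"
    and "k \<in> {1, 2} \<Longrightarrow> M0 \<otimes>\<^sub>H Mks n k s \<cong>\<^sub>H dsum_pow k (M0 :: 'a hmod)"
proof -
  show "M0 \<otimes>\<^sub>H Ni i \<cong>\<^sub>H (M0 :: 'a hmod)"
    using M0_tens_dim_1[OF hmod_carrier(5,6)] by (simp add: Ni_eq_Nmod)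
  show "M0 \<otimes>\<^sub>H M0 \<cong>\<^sub>H M0 \<oplus>\<^sub>H (M0 :: 'a hmod)"
    using M0_tens_dim_2[OF hmod_carrier(7,8)] .
  show "M0 \<otimes>\<^sub>H Pj q j \<cong>\<^sub>H M0 \<oplus>\<^sub>H M0"
    using M0_tens_dim_2[OF hmod_carrier(1,2)] by (simp add: Pj_eq_Pmod)
  show "M0 \<otimes>\<^sub>H Mks n k s \<cong>\<^sub>H dsum_pow k (M0 :: 'a hmod)" if "k \<in> {1, 2}"
    using that M0_tens_dim_1[OF Mks_carrier] M0_tens_dim_2[OF Mks_carrier]
    by (auto simp: dsum_empty dsum_pow_2)
qed

lemma tens_Ni:
  fixes q :: "'a::field"
  shows "Mks n 1 s \<otimes>\<^sub>H Ni j \<cong>\<^sub>H (Ni ((j + s div n) mod 2) :: 'a hmod)"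
    and "Mks n 2 s \<otimes>\<^sub>H Ni j \<cong>\<^sub>H (M0 :: 'a hmod)"
    and "Pj q j \<otimes>\<^sub>H Ni i \<cong>\<^sub>H M0"
proof -
  have "(- 1) ^ ((j + s div n) mod 2) = (- 1) ^ (s div n) * ((- 1) ^ j :: 'a)"
    by (simp add: minus_one_power_iff)
  then show "Mks n 1 s \<otimes>\<^sub>H Ni j \<cong>\<^sub>H (Ni ((j + s div n) mod 2) :: 'a hmod)"
    using M1mod_tens_Nmod by (simp add: Mks_eq Ni_eq_Nmod)
  show "Mks n 2 s \<otimes>\<^sub>H Ni j \<cong>\<^sub>H (M0 :: 'a hmod)"
    using Pmod_tens_Nmod[OF neg_one_power_sq] by (simp add: Mks_eq Ni_eq_Nmod)
  show "Pj q j \<otimes>\<^sub>H Ni i \<cong>\<^sub>H M0"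
    using Pmod_tens_Nmod[OF neg_one_power_sq] by (simp add: Pj_eq_Pmod Ni_eq_Nmod)
qed

lemma tens_M0:
  fixes q :: "'a::field"
  shows "M0 \<oplus>\<^sub>H M0 \<cong>\<^sub>H Pj q j \<otimes>\<^sub>H M0"
    and "k \<in> {1, 2} \<Longrightarrow> dsum_pow k M0 \<cong>\<^sub>H Mks n k s \<otimes>\<^sub>H (M0 :: 'a hmod)"
proof -
  show "M0 \<oplus>\<^sub>H M0 \<cong>\<^sub>H Pj q j \<otimes>\<^sub>H M0"
    using hiso_sym[OF Pmod_tens_M0] by (simp add: Pj_eq_Pmod)
  show "dsum_pow k M0 \<cong>\<^sub>H Mks n k s \<otimes>\<^sub>H (M0 :: 'a hmod)" if "k \<in> {1, 2}"
    using that hiso_sym[OF M1mod_tens_M0[OF neg_one_power_sq]] hiso_sym[OF Pmod_tens_M0]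
    by (auto simp: Mks_eq dsum_empty dsum_pow_2)
qed

lemma Pj_nondegenerate:
  fixes q :: "'a::field"
  assumes "primitive_root (2 * n) q" and "1 \<le> j" and "j \<le> n - 1"
  shows "1 - (q ^ j)\<^sup>2 \<noteq> 0"
  using primitive_root_sq_pow_eq_1_iff[OF assms(1), of j] assms(2,3) by (auto dest: dvd_imp_le)

lemma Mks_tens_Pj:
  fixes q :: "'a::field"
  assumes "primitive_root (2 * n) q" and "k \<in> {1, 2}" and "1 \<le> j" and "j \<le> n - 1"
  shows "Mks n k s \<otimes>\<^sub>H Pj q j \<cong>\<^sub>H dsum_pow k (Pj q j)"
    and "dsum_pow k (Pj q j) \<cong>\<^sub>H Pj q j \<otimes>\<^sub>H Mks n k s"
  using Mks_tens_Pmod[OF assms(2) Pj_nondegenerate[OF assms(1,3,4)]] by (simp_all add: Pj_eq_Pmod)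

lemma Pj_tens_Pj:
  fixes q :: "'a::field"
  assumes "primitive_root (2 * n) q" and "1 \<le> i" "i \<le> n - 1" "1 \<le> j" "j \<le> n - 1"
  shows "n dvd (i + j) \<Longrightarrow> Pj q i \<otimes>\<^sub>H Pj q j \<cong>\<^sub>H Mks n 2 0 \<oplus>\<^sub>H Mks n 2 n"
    and "\<not> n dvd (i + j) \<Longrightarrow> Pj q i \<otimes>\<^sub>H Pj q j \<cong>\<^sub>H Pj q (i + j) \<oplus>\<^sub>H Pj q (i + j)"
proof -
  have "0 < n"
    using assms(2,3) by simp
  show "Pj q i \<otimes>\<^sub>H Pj q j \<cong>\<^sub>H Mks n 2 0 \<oplus>\<^sub>H Mks n 2 n" if dvd: "n dvd (i + j)"
  proof -
    obtain c where c: "i + j = n * c"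
      using dvd by (auto elim: dvdE)
    have "0 < c"
      using c assms(2) by (cases c) auto
    moreover have "n * c < n * 2"
      using c assms(2-5) by linarith
    ultimately have "i + j = n"
      using c by simp
    then have "(q ^ i * q ^ j)\<^sup>2 = 1"
      using primitive_root_pow_half[OF assms(1) \<open>0 < n\<close>] by (simp add: power_add[symmetric])
    then show ?thesis
      using Pmod_tens_Pmod_degenerate \<open>0 < n\<close> by (simp add: Pj_eq_Pmod Mks_eq)
  qed
  show "Pj q i \<otimes>\<^sub>H Pj q j \<cong>\<^sub>H Pj q (i + j) \<oplus>\<^sub>H Pj q (i + j)" if "\<not> n dvd (i + j)"
  proof -
    have "(q ^ i)\<^sup>2 * (q ^ j)\<^sup>2 \<noteq> 1"
      using that primitive_root_sq_pow_eq_1_iff[OF assms(1) \<open>0 < n\<close>, of "i + j"]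
      by (simp add: power_add power_mult_distrib)
    then show ?thesis
      using Pmod_tens_Pmod by (simp add: Pj_eq_Pmod power_add)
  qed
qed

theorem theorem5p3:
  fixes q :: "'a::field_char_0" and n :: nat
  assumes "alg_closed TYPE('a)"
    and "n \<ge> 2"
    and "primitive_root (2 * n) q"
  shows
   "(\<forall>i j. 1 \<le> i \<and> i \<le> n - 1 \<and> 1 \<le> j \<and> j \<le> n - 1 \<longrightarrow>
       (n dvd (i + j) \<longrightarrow> Pj q i \<otimes>\<^sub>H Pj q j \<cong>\<^sub>H Mks n 2 0 \<oplus>\<^sub>H Mks n 2 n) \<and>
       (\<not> n dvd (i + j) \<longrightarrow> Pj q i \<otimes>\<^sub>H Pj q j \<cong>\<^sub>H Pj q (i + j) \<oplus>\<^sub>H Pj q (i + j)))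
  \<and> (\<forall>k s j. k \<in> {1, 2} \<and> s \<in> {0, n} \<and> 1 \<le> j \<and> j \<le> n - 1 \<longrightarrow>
       Mks n k s \<otimes>\<^sub>H Pj q j \<cong>\<^sub>H dsum_pow k (Pj q j) \<and>
       dsum_pow k (Pj q j) \<cong>\<^sub>H Pj q j \<otimes>\<^sub>H Mks n k s)
  \<and> (\<forall>k l s j. k \<in> {1, 2} \<and> l \<in> {1, 2} \<and> s \<in> {0, n} \<and> j \<in> {0, n} \<longrightarrow>
       (k + l = 4 \<longrightarrow> Mks n k s \<otimes>\<^sub>H Mks n l j \<cong>\<^sub>H Mks n 2 0 \<oplus>\<^sub>H Mks n 2 n) \<and>
       (k + l < 4 \<longrightarrow> Mks n k s \<otimes>\<^sub>H Mks n l j \<cong>\<^sub>H Mks n (k + l - 1) ((s + j) mod (2 * n))))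
  \<and> (\<forall>i j. i \<in> {0, 1} \<and> j \<in> {0, 1} \<longrightarrow> Ni i \<otimes>\<^sub>H Ni j \<cong>\<^sub>H Ni i)
  \<and> (\<forall>s j. s \<in> {0, n} \<and> j \<in> {0, 1} \<longrightarrow>
       Mks n 1 s \<otimes>\<^sub>H Ni j \<cong>\<^sub>H Ni ((j + s div n) mod 2) \<and>
       Mks n 2 s \<otimes>\<^sub>H Ni j \<cong>\<^sub>H M0)
  \<and> (\<forall>k s j. k \<in> {1, 2} \<and> s \<in> {0, n} \<and> j \<in> {0, 1} \<longrightarrow>
       Ni j \<otimes>\<^sub>H Mks n k s \<cong>\<^sub>H dsum_pow k (Ni j))
  \<and> (\<forall>i j. i \<in> {0, 1} \<and> 1 \<le> j \<and> j \<le> n - 1 \<longrightarrow>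
       Ni i \<otimes>\<^sub>H Pj q j \<cong>\<^sub>H Ni i \<oplus>\<^sub>H Ni i \<and> Pj q j \<otimes>\<^sub>H Ni i \<cong>\<^sub>H M0)
  \<and> (\<forall>i. i \<in> {0, 1} \<longrightarrow>
       Ni i \<otimes>\<^sub>H M0 \<cong>\<^sub>H Ni i \<oplus>\<^sub>H Ni i \<and> M0 \<otimes>\<^sub>H Ni i \<cong>\<^sub>H M0)
  \<and> M0 \<otimes>\<^sub>H M0 \<cong>\<^sub>H M0 \<oplus>\<^sub>H M0
  \<and> (\<forall>k s. k \<in> {1, 2} \<and> s \<in> {0, n} \<longrightarrow>
       M0 \<otimes>\<^sub>H Mks n k s \<cong>\<^sub>H dsum_pow k M0 \<and> dsum_pow k M0 \<cong>\<^sub>H Mks n k s \<otimes>\<^sub>H M0)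
  \<and> (\<forall>j. 1 \<le> j \<and> j \<le> n - 1 \<longrightarrow>
       M0 \<otimes>\<^sub>H Pj q j \<cong>\<^sub>H M0 \<oplus>\<^sub>H M0 \<and> M0 \<oplus>\<^sub>H M0 \<cong>\<^sub>H Pj q j \<otimes>\<^sub>H M0)"
proof -
  have "0 < n"
    using assms(2) by simp
  show ?thesis
    by (intro conjI allI impI; (elim conjE)?)
      (blast intro: Pj_tens_Pj[OF assms(3)] Mks_tens_Pj[OF assms(3)] Mks_tens_Mks[OF \<open>0 < n\<close>]
        Ni_tens tens_Ni M0_tens tens_M0)+
qed

end
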